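(* The space $C^\infty(\mathbb R,\mathcal S(\mathbb R))$ of smooth curves in $\mathcal S(\mathbb R)$ consists (via $c\leftrightarrow f$, $f(t,x)=c(t)(x)$) exactly of all functions $f\in C^\infty(\mathbb R^2,\mathbb R)$ with the following property: for all $k,n,m\in\mathbb N_{\ge0}$ the expression $(1+|x|^2)^k\partial_t^n\partial_x^mf(t,x)$ is bounded uniformly in $x\in\mathbb R$, locally uniformly in $t\in\mathbb R$.
   Context: $\mathcal S(\mathbb R)$ is the nuclear Fréchet space of rapidly decreasing smooth functions $f$, i.e. those for which $x\mapsto(1+|x|^2)^k\partial_x^nf(x)$ is bounded for all $k,n$, with the locally convex topology given by these seminorms. Smoothness of curves is in the usual (convenient) sense. *)

theory Defs
  imports "HOL-Analysis.Analysis"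
begin

definition schwartz :: "(real \<Rightarrow> real) set" where
  "schwartz = {f. (\<forall>n x. ((deriv ^^ n) f) differentiable (at x)) \<and>
      (\<forall>k n::nat. bounded (range (\<lambda>x. (1 + \<bar>x\<bar>^2)^k * (deriv ^^ n) f x)))}"

definition seminormS :: "nat \<Rightarrow> nat \<Rightarrow> (real \<Rightarrow> real) \<Rightarrow> real" where
  "seminormS k n g = (SUP x. (1 + \<bar>x\<bar>^2)^k * \<bar>(deriv ^^ n) g x\<bar>)"

text \<open>d is the derivative at t of the curve c in S(R): the difference quotient
  converges to d in the locally convex topology of S(R).\<close>
definition has_S_deriv :: "(real \<Rightarrow> real \<Rightarrow> real) \<Rightarrow> (real \<Rightarrow> real) \<Rightarrow> real \<Rightarrow> bool" where
  "has_S_deriv c d t \<longleftrightarrow>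
     (\<forall>k n. ((\<lambda>h. seminormS k n (\<lambda>x. (c (t + h) x - c t x) / h - d x)) \<longlongrightarrow> 0) (at 0))"

definition smooth_curve_S :: "(real \<Rightarrow> real \<Rightarrow> real) \<Rightarrow> bool" where
  "smooth_curve_S c \<longleftrightarrow> (\<exists>D :: nat \<Rightarrow> real \<Rightarrow> real \<Rightarrow> real.
      D 0 = c \<and> (\<forall>j t. D j t \<in> schwartz) \<and> (\<forall>j t. has_S_deriv (D j) (D (Suc j) t) t))"

definition dt :: "(real \<times> real \<Rightarrow> real) \<Rightarrow> real \<times> real \<Rightarrow> real" where
  "dt g = (\<lambda>(t, x). deriv (\<lambda>s. g (s, x)) t)"

definition dx :: "(real \<times> real \<Rightarrow> real) \<Rightarrow> real \<times> real \<Rightarrow> real" where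
  "dx g = (\<lambda>(t, x). deriv (\<lambda>y. g (t, y)) x)"

fun pds :: "bool list \<Rightarrow> (real \<times> real \<Rightarrow> real) \<Rightarrow> real \<times> real \<Rightarrow> real" where
  "pds [] g = g"
| "pds (b # bs) g = (if b then dt else dx) (pds bs g)"

definition smooth2 :: "(real \<times> real \<Rightarrow> real) \<Rightarrow> bool" where
  "smooth2 f \<longleftrightarrow> (\<forall>bs. continuous_on UNIV (pds bs f) \<and>
      (\<forall>t x. (\<lambda>s. pds bs f (s, x)) differentiable (at t) \<and>
             (\<lambda>y. pds bs f (t, y)) differentiable (at x)))"

end

theory Submission
  imports Defs
begin

(* Let c be a smooth curve in S(R) with derivative curves c_0 = c, c_1, c_2, ... and
   f(t, x) = c(t)(x).  The seminorms dominate point values of x-derivatives, so convergence of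
   the difference quotients of c_j in S(R) gives the pointwise partial derivative in t, and all
   iterated partials of f are the functions (t, x) |-> (c_j t)^(m) (x).  A differentiable curve
   is locally bounded in every seminorm; this yields the weighted bounds, and it makes each
   (c_j t)^(m) (x) Lipschitz in t locally uniformly in x, hence jointly continuous.

   Conversely, by Clairaut's theorem the partials of f commute, so the x-derivatives of the
   slices of dt^j f are slices of dt^j dx^m f, and these slices lie in S(R).  Taylor's formula
   in t with the bound on dt^2 dx^m f bounds every seminorm of the remainder of the difference
   quotient by a multiple of |h|, so t |-> (dt^j f)(t, -) is a smooth curve with derivatives
   t |-> (dt^(j+1) f)(t, -). *)

section \<open>Mean value estimates\<close>

lemma MVT_abs:
  fixes f f' :: "real \<Rightarrow> real"
  assumes "\<And>s. (f has_real_derivative f' s) (at s)"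
  shows "\<exists>z. \<bar>z - t\<bar> \<le> \<bar>h\<bar> \<and> f (t + h) - f t = h * f' z"
proof -
  have "((\<lambda>s. f (t + s)) has_real_derivative f' (t + s)) (at s)" for s
    using DERIV_shift[of f "f' (t + s)" s t] assms by (simp add: add.commute)
  then obtain s where "\<bar>s\<bar> \<le> \<bar>h\<bar>" "f (t + h) = f t + f' (t + s) * h"
    using Maclaurin_bi_le[of "\<lambda>m s. if m = 0 then f (t + s) else f' (t + s)" "\<lambda>s. f (t + s)" 1 h]
    by auto
  then show ?thesis
    by (intro exI[of _ "t + s"]) simp
qed

lemma second_order_remainder_bound:
  fixes f f' f'' :: "real \<Rightarrow> real"
  assumes f': "\<And>s. (f has_real_derivative f' s) (at s)"
    and f'': "\<And>s. (f' has_real_derivative f'' s) (at s)"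
    and B: "\<And>s. \<bar>s - t\<bar> \<le> \<bar>h\<bar> \<Longrightarrow> \<bar>f'' s\<bar> \<le> B"
  shows "\<bar>f (t + h) - f t - h * f' t\<bar> \<le> B * h^2"
proof -
  let ?S = "cball t \<bar>h\<bar>"
  have S: "convex ?S" "t \<in> ?S" "t + h \<in> ?S"
    by (auto simp: dist_real_def)
  have "0 \<le> B"
    using B[of t] by simp
  have "\<bar>f' s - f' t\<bar> \<le> B * \<bar>h\<bar>" if "s \<in> ?S" for s
  proof -
    have "norm (f' s - f' t) \<le> B * norm (s - t)"
      using S that has_field_derivative_at_within[OF f''] B
      by (intro field_differentiable_bound[of ?S f' f'' B s t])
        (auto simp: dist_real_def abs_minus_commute)
    also have "\<dots> \<le> B * \<bar>h\<bar>"
      using that \<open>0 \<le> B\<close> by (intro mult_left_mono) (auto simp: dist_real_def)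
    finally show ?thesis
      by simp
  qed
  then have "norm ((f (t + h) - (t + h) * f' t) - (f t - t * f' t)) \<le> (B * \<bar>h\<bar>) * norm (t + h - t)"
    using S has_field_derivative_at_within[OF f']
    by (intro field_differentiable_bound[of ?S "\<lambda>s. f s - s * f' t" "\<lambda>s. f' s - f' t" _ "t + h" t])
      (auto intro!: derivative_eq_intros)
  then show ?thesis
    by (simp add: algebra_simps power2_eq_square)
qed

lemma isCont_if_bounded_partial_deriv:
  fixes G G' :: "real \<Rightarrow> real \<Rightarrow> real"
  assumes cont: "isCont (G t0) x0"
    and deriv: "\<And>s y. ((\<lambda>s. G s y) has_real_derivative G' s y) (at s)"
    and "e > 0" and bound: "\<And>s y. \<bar>s - t0\<bar> < e \<Longrightarrow> \<bar>G' s y\<bar> \<le> B"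
  shows "isCont (\<lambda>p. G (fst p) (snd p)) (t0, x0)"
proof -
  have lipschitz: "norm (G s y - G t0 y) \<le> B * norm (s - t0)" if "\<bar>s - t0\<bar> < e" for s y
    using that has_field_derivative_at_within[OF deriv] bound
    by (intro field_differentiable_bound[of "ball t0 e" "\<lambda>s. G s y" "\<lambda>s. G' s y" B s t0])
      (auto simp: dist_real_def)
  have "eventually (\<lambda>p. norm (G (fst p) (snd p) - G t0 (snd p)) \<le> B * \<bar>fst p - t0\<bar>) (at (t0, x0))"
    unfolding eventually_at
  proof (intro exI[of _ e] conjI ballI impI)
    fix p :: "real \<times> real"
    assume "p \<noteq> (t0, x0) \<and> dist p (t0, x0) < e"
    then have "\<bar>fst p - t0\<bar> < e"
      using dist_fst_le[of p "(t0, x0)"] by (simp add: dist_real_def)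
    then show "norm (G (fst p) (snd p) - G t0 (snd p)) \<le> B * \<bar>fst p - t0\<bar>"
      using lipschitz by simp
  qed (use \<open>e > 0\<close> in simp)
  moreover have "((\<lambda>p. B * \<bar>fst p - t0\<bar>) \<longlongrightarrow> 0) (at (t0, x0))"
    by (auto intro!: tendsto_eq_intros)
  ultimately have "((\<lambda>p. G (fst p) (snd p) - G t0 (snd p)) \<longlongrightarrow> 0) (at (t0, x0))"
    by (rule Lim_null_comparison)
  moreover have "((\<lambda>p. G t0 (snd p)) \<longlongrightarrow> G t0 x0) (at (t0, x0))"
    by (rule isCont_tendsto_compose[OF cont]) (auto intro!: tendsto_eq_intros)
  ultimately show ?thesis
    unfolding continuous_at by (fastforce dest: tendsto_add)
qed

section \<open>Smooth functions and the Schwartz space\<close>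

definition smooth_fun :: "(real \<Rightarrow> real) \<Rightarrow> bool" where
  "smooth_fun g \<longleftrightarrow> (\<forall>n x. (deriv ^^ n) g differentiable (at x))"

lemma smooth_fun_has_deriv:
  "smooth_fun g \<Longrightarrow> ((deriv ^^ n) g has_real_derivative (deriv ^^ Suc n) g x) (at x)"
  by (simp add: smooth_fun_def DERIV_deriv_iff_real_differentiable)

lemma funpow_deriv_lincomb:
  assumes "smooth_fun f" "smooth_fun g"
  shows "(deriv ^^ n) (\<lambda>x. a * f x + b * g x) = (\<lambda>x. a * (deriv ^^ n) f x + b * (deriv ^^ n) g x)"
proof (induction n)
  case (Suc n)
  have "((\<lambda>x. a * (deriv ^^ n) f x + b * (deriv ^^ n) g x) has_real_derivative
      a * (deriv ^^ Suc n) f x + b * (deriv ^^ Suc n) g x) (at x)" for x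
    using assms by (intro DERIV_add DERIV_cmult smooth_fun_has_deriv)
  from DERIV_imp_deriv[OF this] show ?case
    by (simp add: Suc.IH fun_eq_iff)
qed simp

lemma smooth_fun_lincomb:
  assumes "smooth_fun f" "smooth_fun g"
  shows "smooth_fun (\<lambda>x. a * f x + b * g x)"
  unfolding smooth_fun_def funpow_deriv_lincomb[OF assms]
  using assms by (auto simp: smooth_fun_def)

lemma schwartz_imp_smooth_fun: "g \<in> schwartz \<Longrightarrow> smooth_fun g"
  by (simp add: schwartz_def smooth_fun_def)

lemma schwartz_bound:
  assumes "g \<in> schwartz"
  obtains B where "\<And>x. (1 + \<bar>x\<bar>^2)^k * \<bar>(deriv ^^ n) g x\<bar> \<le> B"
  using assms by (force simp: schwartz_def bounded_iff abs_mult)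

lemma schwartzI:
  assumes "smooth_fun g" "\<And>k n. \<exists>B. \<forall>x. (1 + \<bar>x\<bar>^2)^k * \<bar>(deriv ^^ n) g x\<bar> \<le> B"
  shows "g \<in> schwartz"
  using assms by (force simp: schwartz_def smooth_fun_def bounded_iff abs_mult)

lemma schwartz_lincomb:
  assumes "f \<in> schwartz" "g \<in> schwartz"
  shows "(\<lambda>x. a * f x + b * g x) \<in> schwartz"
proof (rule schwartzI)
  note smooth = assms[THEN schwartz_imp_smooth_fun]
  show "smooth_fun (\<lambda>x. a * f x + b * g x)"
    using smooth by (rule smooth_fun_lincomb)
  fix k n
  obtain Bf Bg where Bf: "\<And>x. (1 + \<bar>x\<bar>^2)^k * \<bar>(deriv ^^ n) f x\<bar> \<le> Bf"
    and Bg: "\<And>x. (1 + \<bar>x\<bar>^2)^k * \<bar>(deriv ^^ n) g x\<bar> \<le> Bg"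
    using assms by (meson schwartz_bound)
  have "(1 + \<bar>x\<bar>^2)^k * \<bar>a * (deriv ^^ n) f x + b * (deriv ^^ n) g x\<bar> \<le> \<bar>a\<bar> * Bf + \<bar>b\<bar> * Bg" for x
  proof -
    let ?w = "(1 + \<bar>x\<bar>^2)^k"
    have "?w * \<bar>a * (deriv ^^ n) f x + b * (deriv ^^ n) g x\<bar>
        \<le> \<bar>a\<bar> * (?w * \<bar>(deriv ^^ n) f x\<bar>) + \<bar>b\<bar> * (?w * \<bar>(deriv ^^ n) g x\<bar>)"
    proof -
      have "\<bar>a * (deriv ^^ n) f x + b * (deriv ^^ n) g x\<bar> \<le> \<bar>a\<bar> * \<bar>(deriv ^^ n) f x\<bar> + \<bar>b\<bar> * \<bar>(deriv ^^ n) g x\<bar>"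
        by (metis abs_mult abs_triangle_ineq)
      then have "?w * \<bar>a * (deriv ^^ n) f x + b * (deriv ^^ n) g x\<bar>
          \<le> ?w * (\<bar>a\<bar> * \<bar>(deriv ^^ n) f x\<bar> + \<bar>b\<bar> * \<bar>(deriv ^^ n) g x\<bar>)"
        by (rule mult_left_mono) simp
      then show ?thesis
        by (simp add: algebra_simps)
    qed
    also have "\<dots> \<le> \<bar>a\<bar> * Bf + \<bar>b\<bar> * Bg"
      using Bf Bg by (intro add_mono mult_left_mono) auto
    finally show ?thesis .
  qed
  then show "\<exists>B. \<forall>x. (1 + \<bar>x\<bar>^2)^k * \<bar>(deriv ^^ n) (\<lambda>x. a * f x + b * g x) x\<bar> \<le> B"
    unfolding funpow_deriv_lincomb[OF smooth] by blast
qed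

lemma seminormS_upper:
  assumes "g \<in> schwartz"
  shows "(1 + \<bar>x\<bar>^2)^k * \<bar>(deriv ^^ n) g x\<bar> \<le> seminormS k n g"
proof -
  obtain B where "\<And>x. (1 + \<bar>x\<bar>^2)^k * \<bar>(deriv ^^ n) g x\<bar> \<le> B"
    using schwartz_bound[OF assms, where k=k and n=n] by blast
  then show ?thesis
    unfolding seminormS_def by (intro cSUP_upper bdd_aboveI2) auto
qed

lemma seminormS_least:
  assumes "\<And>x. (1 + \<bar>x\<bar>^2)^k * \<bar>(deriv ^^ n) g x\<bar> \<le> M"
  shows "seminormS k n g \<le> M"
  unfolding seminormS_def by (rule cSUP_least) (use assms in auto)

lemma seminormS_nonneg: "g \<in> schwartz \<Longrightarrow> 0 \<le> seminormS k n g"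
  by (rule order_trans[OF _ seminormS_upper[of g 0]]) auto

section \<open>Differentiable curves in S(R)\<close>

definition dq_remainder :: "(real \<Rightarrow> real \<Rightarrow> real) \<Rightarrow> (real \<Rightarrow> real) \<Rightarrow> real \<Rightarrow> real \<Rightarrow> real \<Rightarrow> real" where
  "dq_remainder c d t h = (\<lambda>x. (c (t + h) x - c t x) / h - d x)"

lemma has_S_deriv_iff_dq_remainder:
  "has_S_deriv c d t \<longleftrightarrow> (\<forall>k n. ((\<lambda>h. seminormS k n (dq_remainder c d t h)) \<longlongrightarrow> 0) (at 0))"
  by (simp add: has_S_deriv_def dq_remainder_def)

(* Written as a nested linear combination so that the lemmas on a * f + b * g apply. *)
lemma dq_remainder_lincomb:
  "dq_remainder c d t h = (\<lambda>x. 1 * (1 / h * c (t + h) x + (- 1 / h) * c t x) + (- 1) * d x)"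
  by (simp add: dq_remainder_def fun_eq_iff diff_divide_distrib)

lemma schwartz_dq_remainder:
  assumes "c (t + h) \<in> schwartz" "c t \<in> schwartz" "d \<in> schwartz"
  shows "dq_remainder c d t h \<in> schwartz"
  unfolding dq_remainder_lincomb by (intro schwartz_lincomb assms)

lemma funpow_deriv_dq_remainder:
  assumes "c (t + h) \<in> schwartz" "c t \<in> schwartz" "d \<in> schwartz"
  shows "(deriv ^^ n) (dq_remainder c d t h) x
    = ((deriv ^^ n) (c (t + h)) x - (deriv ^^ n) (c t) x) / h - (deriv ^^ n) d x"
proof -
  note smooth = assms[THEN schwartz_imp_smooth_fun]
  show ?thesis
    unfolding dq_remainder_lincomb funpow_deriv_lincomb[OF smooth_fun_lincomb[OF smooth(1,2)] smooth(3)]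
      funpow_deriv_lincomb[OF smooth(1,2)]
    by (simp add: diff_divide_distrib)
qed

lemma has_S_deriv_imp_has_real_derivative:
  assumes "\<And>s. c s \<in> schwartz" "d \<in> schwartz" "has_S_deriv c d t"
  shows "((\<lambda>s. (deriv ^^ m) (c s) x) has_real_derivative (deriv ^^ m) d x) (at t)"
proof -
  have lim: "((\<lambda>h. seminormS 0 m (dq_remainder c d t h)) \<longlongrightarrow> 0) (at 0)"
    using assms(3) by (simp add: has_S_deriv_iff_dq_remainder)
  have "norm ((deriv ^^ m) (dq_remainder c d t h) x) \<le> seminormS 0 m (dq_remainder c d t h)" for h
    using seminormS_upper[OF schwartz_dq_remainder[OF assms(1,1,2)], where x = x and k = 0 and n = m]
    by simp
  then have "((\<lambda>h. (deriv ^^ m) (dq_remainder c d t h) x) \<longlongrightarrow> 0) (at 0)"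
    by (intro Lim_null_comparison[OF always_eventually lim] allI)
  from tendsto_add[OF this tendsto_const[of "(deriv ^^ m) d x"]] show ?thesis
    unfolding funpow_deriv_dq_remainder[OF assms(1,1,2)] DERIV_def by simp
qed

lemma seminormS_curve_le:
  assumes c: "\<And>s. c s \<in> schwartz" and d: "d \<in> schwartz" and "h \<noteq> 0"
  shows "seminormS k m (c (t + h))
    \<le> seminormS k m (c t) + \<bar>h\<bar> * (seminormS k m (dq_remainder c d t h) + seminormS k m d)"
proof (rule seminormS_least)
  fix x
  let ?w = "(1 + \<bar>x\<bar>^2)^k" and ?a = "(deriv ^^ m) (c t) x"
    and ?r = "(deriv ^^ m) (dq_remainder c d t h) x" and ?s = "(deriv ^^ m) d x"
  have "h * (?r + ?s) = (deriv ^^ m) (c (t + h)) x - ?a"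
    using \<open>h \<noteq> 0\<close> by (simp add: funpow_deriv_dq_remainder[OF c c d])
  then have "\<bar>(deriv ^^ m) (c (t + h)) x\<bar> = \<bar>?a + h * (?r + ?s)\<bar>"
    by simp
  also have "\<dots> \<le> \<bar>?a\<bar> + \<bar>h\<bar> * \<bar>?r + ?s\<bar>"
    by (metis abs_mult abs_triangle_ineq)
  also have "\<dots> \<le> \<bar>?a\<bar> + \<bar>h\<bar> * (\<bar>?r\<bar> + \<bar>?s\<bar>)"
    by (simp add: mult_left_mono abs_triangle_ineq)
  finally have "\<bar>(deriv ^^ m) (c (t + h)) x\<bar> \<le> \<bar>?a\<bar> + \<bar>h\<bar> * (\<bar>?r\<bar> + \<bar>?s\<bar>)" .
  then have "?w * \<bar>(deriv ^^ m) (c (t + h)) x\<bar> \<le> ?w * (\<bar>?a\<bar> + \<bar>h\<bar> * (\<bar>?r\<bar> + \<bar>?s\<bar>))"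
    by (rule mult_left_mono) simp
  also have "\<dots> = ?w * \<bar>?a\<bar> + \<bar>h\<bar> * (?w * \<bar>?r\<bar> + ?w * \<bar>?s\<bar>)"
    by (simp add: algebra_simps)
  also have "\<dots> \<le> seminormS k m (c t) + \<bar>h\<bar> * (seminormS k m (dq_remainder c d t h) + seminormS k m d)"
    using seminormS_upper[OF c] seminormS_upper[OF d] seminormS_upper[OF schwartz_dq_remainder[OF c c d]]
    by (intro add_mono mult_left_mono) auto
  finally show "?w * \<bar>(deriv ^^ m) (c (t + h)) x\<bar> \<le> \<dots>" .
qed

lemma has_S_deriv_locally_bounded:
  assumes c: "\<And>s. c s \<in> schwartz" and d: "d \<in> schwartz" and "has_S_deriv c d t0"
  obtains e B where "e > 0" "\<And>t x. \<bar>t - t0\<bar> < e \<Longrightarrow> (1 + \<bar>x\<bar>^2)^k * \<bar>(deriv ^^ m) (c t) x\<bar> \<le> B"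
proof -
  let ?S = "seminormS k m"
  have "((\<lambda>h. ?S (dq_remainder c d t0 h)) \<longlongrightarrow> 0) (at 0)"
    using assms(3) by (simp add: has_S_deriv_iff_dq_remainder)
  then have "eventually (\<lambda>h. ?S (dq_remainder c d t0 h) < 1) (at 0)"
    by (rule order_tendstoD) simp
  then obtain e where "e > 0" and small: "\<And>h. h \<noteq> 0 \<Longrightarrow> \<bar>h\<bar> < e \<Longrightarrow> ?S (dq_remainder c d t0 h) < 1"
    by (auto simp: eventually_at dist_real_def)
  have "?S (c t) \<le> ?S (c t0) + e * (1 + ?S d)" if "\<bar>t - t0\<bar> < e" for t
  proof (cases "t = t0")
    case True
    then show ?thesis
      using seminormS_nonneg[OF d, of k m] \<open>e > 0\<close> by simp
  next
    case False
    then have "?S (c t) \<le> ?S (c t0) + \<bar>t - t0\<bar> * (?S (dq_remainder c d t0 (t - t0)) + ?S d)"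
      using seminormS_curve_le[OF c d, where h = "t - t0" and t = t0] by simp
    also have "\<dots> \<le> ?S (c t0) + e * (1 + ?S d)"
    proof -
      have "0 \<le> ?S (dq_remainder c d t0 (t - t0))"
        by (rule seminormS_nonneg[OF schwartz_dq_remainder[OF c c d]])
      then show ?thesis
        using small[of "t - t0"] False that seminormS_nonneg[OF d, of k m]
        by (intro add_left_mono mult_mono) auto
    qed
    finally show ?thesis .
  qed
  note bound = this
  show ?thesis
  proof (rule that[OF \<open>e > 0\<close>])
    fix t x
    assume "\<bar>t - t0\<bar> < e"
    then show "(1 + \<bar>x\<bar>^2)^k * \<bar>(deriv ^^ m) (c t) x\<bar> \<le> ?S (c t0) + e * (1 + ?S d)"
      using seminormS_upper[OF c, of x k m t] bound by (meson order_trans)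
  qed
qed

lemma has_S_derivI_linear_bound:
  assumes c: "\<And>s. c s \<in> schwartz" and d: "d \<in> schwartz"
    and bound: "\<And>k n. \<exists>e>0. \<exists>B. \<forall>h. h \<noteq> 0 \<and> \<bar>h\<bar> < e \<longrightarrow> seminormS k n (dq_remainder c d t h) \<le> \<bar>h\<bar> * B"
  shows "has_S_deriv c d t"
  unfolding has_S_deriv_iff_dq_remainder
proof (intro allI)
  fix k n
  obtain e B where "e > 0" and B: "\<And>h. h \<noteq> 0 \<Longrightarrow> \<bar>h\<bar> < e \<Longrightarrow> seminormS k n (dq_remainder c d t h) \<le> \<bar>h\<bar> * B"
    using bound by blast
  have "eventually (\<lambda>h. norm (seminormS k n (dq_remainder c d t h)) \<le> \<bar>h\<bar> * B) (at 0)"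
    unfolding eventually_at
  proof (intro exI[of _ e] conjI ballI impI)
    fix h :: real
    assume "h \<noteq> 0 \<and> dist h 0 < e"
    then show "norm (seminormS k n (dq_remainder c d t h)) \<le> \<bar>h\<bar> * B"
      using B[of h] seminormS_nonneg[OF schwartz_dq_remainder[OF c c d]] by simp
  qed (use \<open>e > 0\<close> in simp)
  moreover have "((\<lambda>h. \<bar>h\<bar> * B) \<longlongrightarrow> 0) (at (0::real))"
    by (auto intro!: tendsto_eq_intros)
  ultimately show "((\<lambda>h. seminormS k n (dq_remainder c d t h)) \<longlongrightarrow> 0) (at 0)"
    by (rule Lim_null_comparison)
qed

section \<open>Partial derivatives on R^2\<close>

lemma pds_append: "pds (bs @ cs) g = pds bs (pds cs g)"
  by (induction bs) auto

lemma smooth2_pds: "smooth2 g \<Longrightarrow> smooth2 (pds bs g)"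
  unfolding smooth2_def by (simp flip: pds_append)

lemma smooth2_dt: "smooth2 g \<Longrightarrow> smooth2 (dt g)"
  using smooth2_pds[of g "[True]"] by simp

lemma smooth2_dx: "smooth2 g \<Longrightarrow> smooth2 (dx g)"
  using smooth2_pds[of g "[False]"] by simp

lemma smooth2_funpow_dt_dx: "smooth2 f \<Longrightarrow> smooth2 ((dt ^^ n) ((dx ^^ m) f))"
proof -
  assume "smooth2 f"
  then have "smooth2 ((dx ^^ m) f)"
    by (induction m) (simp_all add: smooth2_dx)
  then show ?thesis
    by (induction n) (simp_all add: smooth2_dt)
qed

lemma smooth2_continuous: "smooth2 g \<Longrightarrow> continuous_on UNIV g"
  unfolding smooth2_def by (metis pds.simps(1))

lemma smooth2_has_dt: "smooth2 g \<Longrightarrow> ((\<lambda>s. g (s, x)) has_real_derivative dt g (t, x)) (at t)"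
  unfolding smooth2_def dt_def by (metis DERIV_deriv_iff_real_differentiable case_prod_conv pds.simps(1))

lemma smooth2_has_dx: "smooth2 g \<Longrightarrow> ((\<lambda>y. g (t, y)) has_real_derivative dx g (t, y)) (at y)"
  unfolding smooth2_def dx_def by (metis DERIV_deriv_iff_real_differentiable case_prod_conv pds.simps(1))

lemma second_difference_mixed_partials:
  assumes g: "smooth2 g" and "h \<noteq> 0"
  obtains p q where "dist p (t, x) \<le> 2 * \<bar>h\<bar>" "dist q (t, x) \<le> 2 * \<bar>h\<bar>"
    and "dx (dt g) p = dt (dx g) q"
proof -
  have near: "dist (s, y) (t, x) \<le> 2 * \<bar>h\<bar>" if "\<bar>s - t\<bar> \<le> \<bar>h\<bar>" "\<bar>y - x\<bar> \<le> \<bar>h\<bar>" for s y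
    using sqrt_sum_squares_le_sum_abs[of "s - t" "y - x"] that
    by (simp add: dist_Pair_Pair dist_real_def)
  txt \<open>The mean value theorem, applied twice in each order, expresses the second difference
    g(t+h, x+h) - g(t+h, x) - g(t, x+h) + g(t, x) as h^2 times either mixed partial.\<close>
  obtain s1 where s1: "\<bar>s1 - t\<bar> \<le> \<bar>h\<bar>"
    "(g (t + h, x + h) - g (t + h, x)) - (g (t, x + h) - g (t, x)) = h * (dt g (s1, x + h) - dt g (s1, x))"
    using MVT_abs[of "\<lambda>s. g (s, x + h) - g (s, x)" "\<lambda>s. dt g (s, x + h) - dt g (s, x)" t h]
      DERIV_diff[OF smooth2_has_dt[OF g] smooth2_has_dt[OF g]] by blast
  obtain y1 where y1: "\<bar>y1 - x\<bar> \<le> \<bar>h\<bar>" "dt g (s1, x + h) - dt g (s1, x) = h * dx (dt g) (s1, y1)"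
    using MVT_abs[of "\<lambda>y. dt g (s1, y)" "\<lambda>y. dx (dt g) (s1, y)" x h]
      smooth2_has_dx[OF smooth2_dt[OF g]] by blast
  obtain y2 where y2: "\<bar>y2 - x\<bar> \<le> \<bar>h\<bar>"
    "(g (t + h, x + h) - g (t, x + h)) - (g (t + h, x) - g (t, x)) = h * (dx g (t + h, y2) - dx g (t, y2))"
    using MVT_abs[of "\<lambda>y. g (t + h, y) - g (t, y)" "\<lambda>y. dx g (t + h, y) - dx g (t, y)" x h]
      DERIV_diff[OF smooth2_has_dx[OF g] smooth2_has_dx[OF g]] by blast
  obtain s2 where s2: "\<bar>s2 - t\<bar> \<le> \<bar>h\<bar>" "dx g (t + h, y2) - dx g (t, y2) = h * dt (dx g) (s2, y2)"
    using MVT_abs[of "\<lambda>s. dx g (s, y2)" "\<lambda>s. dt (dx g) (s, y2)" t h]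
      smooth2_has_dt[OF smooth2_dx[OF g]] by blast
  have "h * (h * dx (dt g) (s1, y1)) = h * (h * dt (dx g) (s2, y2))"
    using s1(2) y1(2) y2(2) s2(2) by (simp add: algebra_simps)
  then have "dx (dt g) (s1, y1) = dt (dx g) (s2, y2)"
    using \<open>h \<noteq> 0\<close> by simp
  then show ?thesis
    using that near s1(1) y1(1) s2(1) y2(1) by blast
qed

lemma smooth2_dx_dt_commute:
  assumes g: "smooth2 g"
  shows "dx (dt g) = dt (dx g)"
proof
  fix p :: "real \<times> real"
  obtain t x where p: "p = (t, x)"
    by fastforce
  let ?A = "dx (dt g)" and ?B = "dt (dx g)"
  show "?A p = ?B p"
  proof (rule ccontr)
    assume "?A p \<noteq> ?B p"
    define e where "e = \<bar>?A p - ?B p\<bar> / 2"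
    have "e > 0"
      using \<open>?A p \<noteq> ?B p\<close> by (simp add: e_def)
    have "continuous_on UNIV ?A" "continuous_on UNIV ?B"
      using g by (simp_all add: smooth2_continuous smooth2_dt smooth2_dx)
    then obtain d1 d2 where "d1 > 0" "d2 > 0"
      and cA: "\<And>q. dist q p < d1 \<Longrightarrow> dist (?A q) (?A p) < e"
      and cB: "\<And>q. dist q p < d2 \<Longrightarrow> dist (?B q) (?B p) < e"
      using \<open>e > 0\<close> unfolding continuous_on_iff by (metis UNIV_I)
    then have "min d1 d2 / 3 \<noteq> 0"
      by simp
    then obtain q1 q2 where "dist q1 p \<le> 2 * \<bar>min d1 d2 / 3\<bar>" "dist q2 p \<le> 2 * \<bar>min d1 d2 / 3\<bar>"
      and "?A q1 = ?B q2"
      unfolding p by (rule second_difference_mixed_partials[OF g])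
    moreover have "dist q1 p < d1" "dist q2 p < d2"
      using calculation \<open>d1 > 0\<close> \<open>d2 > 0\<close> by auto
    ultimately have "\<bar>?A q1 - ?A p\<bar> < e" "\<bar>?A q1 - ?B p\<bar> < e"
      using cA[of q1] cB[of q2] by (simp_all add: dist_real_def)
    then show False
      unfolding e_def by (simp add: abs_if split: if_split_asm)
  qed
qed

lemma funpow_dx_dt_commute:
  "smooth2 g \<Longrightarrow> (dx ^^ m) ((dt ^^ n) g) = (dt ^^ n) ((dx ^^ m) g)"
proof (induction m arbitrary: g)
  case (Suc m)
  have "dx ((dt ^^ n) g) = (dt ^^ n) (dx g)"
    using Suc.prems
  proof (induction n arbitrary: g)
    case (Suc n)
    then show ?case
      by (simp add: smooth2_dt smooth2_dx_dt_commute[OF smooth2_funpow_dt_dx[of g n 0], simplified])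
  qed simp
  then show ?case
    using Suc by (simp add: funpow_Suc_right smooth2_dx del: funpow.simps)
qed simp

lemma funpow_deriv_slice: "(deriv ^^ m) (\<lambda>x. g (t, x)) = (\<lambda>x. (dx ^^ m) g (t, x))"
  by (induction m) (simp_all add: dx_def)

section \<open>Smooth curves in S(R) as functions on R^2\<close>

definition weighted_partials_locally_bounded :: "(real \<times> real \<Rightarrow> real) \<Rightarrow> bool" where
  "weighted_partials_locally_bounded f \<longleftrightarrow>
    (\<forall>k n m :: nat. \<forall>t0. \<exists>e>0. \<exists>B. \<forall>t x. \<bar>t - t0\<bar> < e \<longrightarrow>
        \<bar>(1 + \<bar>x\<bar>^2)^k * (dt ^^ n) ((dx ^^ m) f) (t, x)\<bar> \<le> B)"

lemma weighted_partials_locally_bounded_dt: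
  assumes "smooth2 f" "weighted_partials_locally_bounded f"
  shows "weighted_partials_locally_bounded (dt f)"
proof -
  have "(dt ^^ n) ((dx ^^ m) (dt f)) = (dt ^^ Suc n) ((dx ^^ m) f)" for n m
    using funpow_dx_dt_commute[OF assms(1), of m 1] by (simp add: funpow_Suc_right del: funpow.simps)
  then show ?thesis
    using assms(2) unfolding weighted_partials_locally_bounded_def by metis
qed

lemma smooth2_dt_remainder_bound:
  assumes g: "smooth2 g" and "h \<noteq> 0"
    and B: "\<And>s. \<bar>s - t\<bar> \<le> \<bar>h\<bar> \<Longrightarrow> \<bar>(1 + \<bar>x\<bar>^2)^k * dt (dt g) (s, x)\<bar> \<le> B"
  shows "(1 + \<bar>x\<bar>^2)^k * \<bar>(g (t + h, x) - g (t, x)) / h - dt g (t, x)\<bar> \<le> \<bar>h\<bar> * B"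
proof -
  let ?w = "(1 + \<bar>x\<bar>^2)^k"
  define r where "r = (g (t + h, x) - g (t, x)) / h - dt g (t, x)"
  then have "g (t + h, x) - g (t, x) - h * dt g (t, x) = h * r"
    using \<open>h \<noteq> 0\<close> by (simp add: field_simps)
  then have "?w * g (t + h, x) - ?w * g (t, x) - h * (?w * dt g (t, x)) = h * (?w * r)"
    by (simp add: algebra_simps flip: right_diff_distrib)
  moreover have "\<bar>?w * g (t + h, x) - ?w * g (t, x) - h * (?w * dt g (t, x))\<bar> \<le> B * h^2"
    using g B
    by (intro second_order_remainder_bound[where f' = "\<lambda>s. ?w * dt g (s, x)"
          and f'' = "\<lambda>s. ?w * dt (dt g) (s, x)"])
      (auto intro!: DERIV_cmult smooth2_has_dt smooth2_dt)
  ultimately have "\<bar>h\<bar> * (?w * \<bar>r\<bar>) \<le> \<bar>h\<bar> * (\<bar>h\<bar> * B)"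
    by (simp add: abs_mult power2_eq_square algebra_simps)
  then show ?thesis
    using \<open>h \<noteq> 0\<close> by (simp add: r_def)
qed

lemma slice_in_schwartz:
  assumes f: "smooth2 f" and bounded: "weighted_partials_locally_bounded f"
  shows "(\<lambda>x. f (t, x)) \<in> schwartz"
proof (rule schwartzI)
  show "smooth_fun (\<lambda>x. f (t, x))"
    unfolding smooth_fun_def funpow_deriv_slice
    using smooth2_has_dx[OF smooth2_funpow_dt_dx[OF f, of 0]] real_differentiable_def by auto
  fix k m
  obtain e B where "e > 0" "\<And>s x. \<bar>s - t\<bar> < e \<Longrightarrow> \<bar>(1 + \<bar>x\<bar>^2)^k * (dt ^^ 0) ((dx ^^ m) f) (s, x)\<bar> \<le> B"
    using bounded unfolding weighted_partials_locally_bounded_def by blast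
  then have "(1 + \<bar>x\<bar>^2)^k * \<bar>(deriv ^^ m) (\<lambda>x. f (t, x)) x\<bar> \<le> B" for x
    unfolding funpow_deriv_slice by (simp add: abs_mult)
  then show "\<exists>B. \<forall>x. (1 + \<bar>x\<bar>^2)^k * \<bar>(deriv ^^ m) (\<lambda>x. f (t, x)) x\<bar> \<le> B"
    by blast
qed

lemma slice_has_S_deriv:
  assumes f: "smooth2 f" and bounded: "weighted_partials_locally_bounded f"
  shows "has_S_deriv (\<lambda>t x. f (t, x)) (\<lambda>x. dt f (t, x)) t"
proof -
  let ?c = "\<lambda>t x. f (t, x)" and ?d = "\<lambda>x. dt f (t, x)"
  have schwartz: "?c s \<in> schwartz" "?d \<in> schwartz" for s
    using f bounded weighted_partials_locally_bounded_dt[OF f bounded]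
    by (simp_all add: slice_in_schwartz smooth2_dt)
  then show ?thesis
  proof (rule has_S_derivI_linear_bound)
    fix k n
    let ?g = "(dx ^^ n) f"
    have "smooth2 ?g"
      using smooth2_funpow_dt_dx[OF f, of 0] by simp
    obtain e B where "e > 0"
      and B: "\<And>s x. \<bar>s - t\<bar> < e \<Longrightarrow> \<bar>(1 + \<bar>x\<bar>^2)^k * (dt ^^ 2) ?g (s, x)\<bar> \<le> B"
      using bounded unfolding weighted_partials_locally_bounded_def by blast
    have "seminormS k n (dq_remainder ?c ?d t h) \<le> \<bar>h\<bar> * B" if "h \<noteq> 0" "\<bar>h\<bar> < e" for h
    proof (rule seminormS_least)
      fix x :: real
      have "(deriv ^^ n) (dq_remainder ?c ?d t h) x = (?g (t + h, x) - ?g (t, x)) / h - dt ?g (t, x)"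
        using funpow_dx_dt_commute[OF f, of n 1]
        by (simp add: funpow_deriv_dq_remainder[OF schwartz(1,1,2)] funpow_deriv_slice)
      moreover have "\<bar>(1 + \<bar>x\<bar>^2)^k * dt (dt ?g) (s, x)\<bar> \<le> B" if "\<bar>s - t\<bar> \<le> \<bar>h\<bar>" for s
        using B[of s x] that \<open>\<bar>h\<bar> < e\<close> by (simp add: numeral_2_eq_2)
      ultimately show "(1 + \<bar>x\<bar>^2)^k * \<bar>(deriv ^^ n) (dq_remainder ?c ?d t h) x\<bar> \<le> \<bar>h\<bar> * B"
        using smooth2_dt_remainder_bound[OF \<open>smooth2 ?g\<close> \<open>h \<noteq> 0\<close>] by simp
    qed
    then show "\<exists>e>0. \<exists>B. \<forall>h. h \<noteq> 0 \<and> \<bar>h\<bar> < e \<longrightarrow> seminormS k n (dq_remainder ?c ?d t h) \<le> \<bar>h\<bar> * B"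
      using \<open>e > 0\<close> by blast
  qed
qed

definition curve_partial :: "(nat \<Rightarrow> real \<Rightarrow> real \<Rightarrow> real) \<Rightarrow> nat \<Rightarrow> nat \<Rightarrow> real \<times> real \<Rightarrow> real" where
  "curve_partial D j m p = (deriv ^^ m) (D j (fst p)) (snd p)"

lemma dx_curve_partial: "dx (curve_partial D j m) = curve_partial D j (Suc m)"
  by (auto simp: dx_def curve_partial_def)

context
  fixes D :: "nat \<Rightarrow> real \<Rightarrow> real \<Rightarrow> real"
  assumes DS: "\<And>j t. D j t \<in> schwartz"
    and HD: "\<And>j t. has_S_deriv (D j) (D (Suc j) t) t"
begin

lemma dt_curve_partial: "dt (curve_partial D j m) = curve_partial D (Suc j) m"
  using DERIV_imp_deriv[OF has_S_deriv_imp_has_real_derivative[OF DS DS HD]]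
  by (auto simp: dt_def curve_partial_def)

lemma funpow_dt_dx_curve_partial:
  "(dt ^^ n) ((dx ^^ m) (curve_partial D j l)) = curve_partial D (n + j) (m + l)"
proof -
  have "(dx ^^ m) (curve_partial D j l) = curve_partial D j (m + l)"
    by (induction m) (simp_all add: dx_curve_partial)
  then show ?thesis
    by (induction n) (simp_all add: dt_curve_partial)
qed

lemma continuous_on_curve_partial: "continuous_on UNIV (curve_partial D j m)"
proof (intro continuous_at_imp_continuous_on ballI)
  fix p :: "real \<times> real"
  obtain t0 x0 where p: "p = (t0, x0)"
    by fastforce
  obtain e B where "e > 0" and "\<And>t x. \<bar>t - t0\<bar> < e \<Longrightarrow> (1 + \<bar>x\<bar>^2)^0 * \<bar>(deriv ^^ m) (D (Suc j) t) x\<bar> \<le> B"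
    using has_S_deriv_locally_bounded[OF DS DS HD] by blast
  moreover have "isCont ((deriv ^^ m) (D j t0)) x0"
    using smooth_fun_has_deriv[OF schwartz_imp_smooth_fun[OF DS]] by (rule DERIV_isCont)
  ultimately show "isCont (curve_partial D j m) p"
    unfolding p curve_partial_def[abs_def]
    by (intro isCont_if_bounded_partial_deriv[where G' = "\<lambda>s y. (deriv ^^ m) (D (Suc j) s) y"])
      (auto intro: has_S_deriv_imp_has_real_derivative[OF DS DS HD])
qed

lemma smooth2_curve_partial: "smooth2 (curve_partial D j m)"
proof -
  have pds: "\<exists>j' m'. pds bs (curve_partial D j m) = curve_partial D j' m'" for bs
  proof (induction bs)
    case (Cons b bs)
    then obtain j' m' where "pds bs (curve_partial D j m) = curve_partial D j' m'"
      by blast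
    then show ?case
      by (cases b) (auto simp: dt_curve_partial dx_curve_partial)
  qed auto
  have "(\<lambda>s. curve_partial D j' m' (s, x)) differentiable (at t)" for j' m' t x
    using has_S_deriv_imp_has_real_derivative[OF DS DS HD]
    unfolding curve_partial_def real_differentiable_def by fastforce
  moreover have "(\<lambda>y. curve_partial D j' m' (t, y)) differentiable (at x)" for j' m' t x
    using DS by (simp add: curve_partial_def schwartz_def)
  ultimately show ?thesis
    unfolding smooth2_def by (metis pds continuous_on_curve_partial)
qed

lemma curve_partial_locally_bounded:
  "\<exists>e>0. \<exists>B. \<forall>t x. \<bar>t - t0\<bar> < e \<longrightarrow> \<bar>(1 + \<bar>x\<bar>^2)^k * curve_partial D j m (t, x)\<bar> \<le> B"
proof -
  obtain e B where "e > 0" "\<And>t x. \<bar>t - t0\<bar> < e \<Longrightarrow> (1 + \<bar>x\<bar>^2)^k * \<bar>(deriv ^^ m) (D j t) x\<bar> \<le> B"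
    using has_S_deriv_locally_bounded[OF DS DS HD] by blast
  then show ?thesis
    by (auto simp: curve_partial_def abs_mult)
qed

end

lemma smooth_curve_S_imp_smooth2_bounded:
  assumes "smooth_curve_S (\<lambda>t x. f (t, x))"
  shows "smooth2 f \<and> weighted_partials_locally_bounded f"
proof -
  obtain D where D0: "D 0 = (\<lambda>t x. f (t, x))" and DS: "\<And>j t. D j t \<in> schwartz"
    and HD: "\<And>j t. has_S_deriv (D j) (D (Suc j) t) t"
    using assms unfolding smooth_curve_S_def by blast
  have f: "f = curve_partial D 0 0"
    by (simp add: curve_partial_def D0 fun_eq_iff)
  show ?thesis
    unfolding weighted_partials_locally_bounded_def f funpow_dt_dx_curve_partial[where D = D, OF DS HD]
    using smooth2_curve_partial[where D = D, OF DS HD] curve_partial_locally_bounded[where D = D, OF DS HD]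
    by simp
qed

lemma smooth_curve_S_if_smooth2_bounded:
  assumes "smooth2 f" "weighted_partials_locally_bounded f"
  shows "smooth_curve_S (\<lambda>t x. f (t, x))"
proof -
  have "smooth2 ((dt ^^ j) f) \<and> weighted_partials_locally_bounded ((dt ^^ j) f)" for j
    by (induction j) (simp_all add: assms smooth2_dt weighted_partials_locally_bounded_dt)
  then show ?thesis
    unfolding smooth_curve_S_def
    by (intro exI[of _ "\<lambda>j t x. (dt ^^ j) f (t, x)"]) (simp add: slice_in_schwartz slice_has_S_deriv)
qed

theorem lemma6p3:
  fixes f :: "real \<times> real \<Rightarrow> real"
  shows "smooth_curve_S (\<lambda>t x. f (t, x)) \<longleftrightarrow>
    (smooth2 f \<and>
     (\<forall>k n m :: nat. \<forall>t0. \<exists>e>0. \<exists>B. \<forall>t x. \<bar>t - t0\<bar> < e \<longrightarrow>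
        \<bar>(1 + \<bar>x\<bar>^2)^k * (dt ^^ n) ((dx ^^ m) f) (t, x)\<bar> \<le> B))"
  using smooth_curve_S_imp_smooth2_bounded[of f] smooth_curve_S_if_smooth2_bounded[of f]
  unfolding weighted_partials_locally_bounded_def by blast

end
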